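(* For every $n\ge1$, $$R^*_n=\inf_{\hat H}\ \sup_{\mu\in\mathbb{H}(\mathbb{X})}\mathbb{E}_{X_1,\dots,X_n\sim\mu^n}\Big[\big(\hat H(X_1,\dots,X_n)-H(\mu)\big)^2\Big]=\infty,$$ where the infimum is over all measurable functions $\hat H:\mathbb{X}^n\to\mathbb{R}$.
   Context: $\mathbb{X}$ is a countably infinite set; for a probability $\mu$ on $\mathbb{X}$, $f_\mu(x)=\mu(\{x\})$, $A_\mu=\{x:f_\mu(x)>0\}$, and $H(\mu)=-\sum_{x\in A_\mu}f_\mu(x)\log f_\mu(x)$. $\mathbb{H}(\mathbb{X})$ is the set of probability measures on $\mathbb{X}$ with $H(\mu)<\infty$. $\mu^n$ denotes the $n$-fold product measure (i.i.d. sample of size $n$). *)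

theory Defs
  imports "HOL-Probability.Probability"
begin

definition entropy :: "'a pmf \<Rightarrow> real" where
  "entropy p = infsum (\<lambda>x. - pmf p x * ln (pmf p x)) (set_pmf p)"

definition finite_entropy :: "'a pmf \<Rightarrow> bool" where
  "finite_entropy p \<longleftrightarrow> (\<lambda>x. - pmf p x * ln (pmf p x)) summable_on (set_pmf p)"

end

theory Submission
  imports Defs
begin

text \<open>Fix a point \<open>a\<close> and consider distributions putting mass \<open>1/2\<close> on \<open>a\<close> and spreading
  the other half uniformly over \<open>K\<close> further points: their entropy \<open>ln 2 + (ln K)/2\<close> is
  unbounded. Every estimator takes some fixed value \<open>c\<close> on the sample \<open>(a,\<dots>,a)\<close>, which
  has probability \<open>2\<^sup>-\<^sup>n\<close> under each of these distributions, so its risk is at least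
  \<open>2\<^sup>-\<^sup>n (c - H(p))\<^sup>2\<close>, which is unbounded as well.\<close>

lemma finite_entropy_finite_support: "finite (set_pmf p) \<Longrightarrow> finite_entropy p"
  unfolding finite_entropy_def by (rule summable_on_finite)

lemma entropy_finite_support:
  "finite (set_pmf p) \<Longrightarrow> entropy p = (\<Sum>x\<in>set_pmf p. - pmf p x * ln (pmf p x))"
  unfolding entropy_def by (rule infsum_finite)

lemma entropy_half_point_half_uniform:
  assumes "finite S" "S \<noteq> {}" "a \<notin> S"
  shows "\<exists>p. set_pmf p = insert a S \<and> pmf p a = 1/2 \<and> entropy p = ln 2 + ln (card S) / 2"
proof -
  define K where "K = card S"
  have K: "K \<ge> 1" using assms by (simp add: K_def Suc_le_eq card_gt_0_iff)
  define M where "M = replicate_mset K a + mset_set S"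
  have size_M: "size M = 2 * K" using assms by (simp add: M_def K_def)
  then have "M \<noteq> {#}" using K by auto
  define p where "p = pmf_of_multiset M"
  have set_p: "set_pmf p = insert a S"
    using \<open>M \<noteq> {#}\<close> K assms by (auto simp: p_def M_def)
  have pmf_a: "pmf p a = 1/2"
    using \<open>M \<noteq> {#}\<close> K assms by (simp add: p_def M_def size_M K_def)
  have pmf_S: "pmf p s = 1 / (2 * K)" if "s \<in> S" for s
    using \<open>M \<noteq> {#}\<close> that assms by (auto simp: p_def M_def size_M K_def)
  have "entropy p = - pmf p a * ln (pmf p a) + (\<Sum>s\<in>S. - pmf p s * ln (pmf p s))"
    using assms by (simp add: entropy_finite_support set_p)
  also have "(\<Sum>s\<in>S. - pmf p s * ln (pmf p s)) = K * (- (1 / (2 * K)) * ln (1 / (2 * K)))"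
    by (simp add: pmf_S K_def)
  also have "\<dots> = ln (2 * K) / 2"
    using K by (simp add: ln_div field_simps)
  finally have "entropy p = ln 2 + ln K / 2"
    using K by (simp add: pmf_a ln_div ln_mult field_simps)
  with set_p pmf_a show ?thesis by (auto simp: K_def)
qed

lemma exists_pmf_half_point_large_entropy:
  fixes a :: 'a and D :: real
  assumes "infinite (UNIV :: 'a set)"
  shows "\<exists>p :: 'a pmf. finite_entropy p \<and> pmf p a = 1/2 \<and> D \<le> entropy p"
proof -
  define K :: nat where "K = nat \<lceil>exp (2 * D)\<rceil> + 1"
  have "exp (2 * D) \<le> K" unfolding K_def by linarith
  then have "2 * D \<le> ln K"
    by (metis exp_gt_zero ln_exp ln_le_cancel_iff order_less_le_trans)
  obtain S where S: "finite S" "card S = K" "S \<subseteq> - {a}"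
    using infinite_arbitrarily_large[of "- {a}" K] assms by auto
  then have "S \<noteq> {}" "a \<notin> S" by (auto simp: K_def)
  then obtain p where p: "set_pmf p = insert a S" "pmf p a = 1/2" "entropy p = ln 2 + ln K / 2"
    using entropy_half_point_half_uniform[OF \<open>finite S\<close>] S(2) by blast
  have "finite_entropy p" using S by (simp add: finite_entropy_finite_support p(1))
  moreover have "D \<le> entropy p"
    using \<open>2 * D \<le> ln K\<close> p(3) ln_ge_zero[of "2::real"] by linarith
  ultimately show ?thesis using p(2) by blast
qed

lemma exists_pmf_half_point_far_entropy:
  fixes a :: 'a and c B :: real
  assumes "infinite (UNIV :: 'a set)"
  shows "\<exists>p :: 'a pmf. finite_entropy p \<and> pmf p a = 1/2 \<and> B \<le> (c - entropy p)\<^sup>2"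
proof -
  obtain p :: "'a pmf" where p: "finite_entropy p" "pmf p a = 1/2" "c + sqrt \<bar>B\<bar> \<le> entropy p"
    using exists_pmf_half_point_large_entropy[OF assms] by blast
  then have "\<bar>B\<bar> \<le> (entropy p - c)\<^sup>2" by (simp add: sqrt_le_D)
  then show ?thesis using p(1,2) by (auto simp: power2_commute)
qed

lemma nn_integral_pmf_ge_point:
  "ennreal (pmf M x) * f x \<le> (\<integral>\<^sup>+ y. f y \<partial>measure_pmf M)"
proof -
  have "ennreal (pmf M x) * f x = (\<integral>\<^sup>+ y. f x * indicator {x} y \<partial>measure_pmf M)"
    by (simp add: emeasure_pmf_single mult.commute)
  also have "\<dots> \<le> (\<integral>\<^sup>+ y. f y \<partial>measure_pmf M)"
    by (intro nn_integral_mono) (auto split: split_indicator)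
  finally show ?thesis .
qed

lemma nn_integral_Pi_pmf_ge_const_sample:
  assumes "finite I"
  shows "ennreal (pmf p a ^ card I) * f (\<lambda>i. if i \<in> I then a else d)
           \<le> (\<integral>\<^sup>+ xs. f xs \<partial>measure_pmf (Pi_pmf I d (\<lambda>_. p)))"
  using nn_integral_pmf_ge_point[of "Pi_pmf I d (\<lambda>_. p)" "\<lambda>i. if i \<in> I then a else d" f] assms
  by (simp add: pmf_Pi')

theorem mainTheorem10:
  fixes n :: nat
  assumes "infinite (UNIV :: 'a :: countable set)"
    and "n \<ge> 1"
  shows "(INF Hhat :: (nat \<Rightarrow> 'a) \<Rightarrow> real.
            SUP p \<in> {p :: 'a pmf. finite_entropy p}.
              \<integral>\<^sup>+ xs. ennreal ((Hhat xs - entropy p)\<^sup>2)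
                 \<partial>(measure_pmf (Pi_pmf {..<n} undefined (\<lambda>_. p)))) = \<infinity>"
proof -
  obtain a :: 'a where True by blast
  define xs\<^sub>0 :: "nat \<Rightarrow> 'a" where "xs\<^sub>0 = (\<lambda>i. if i \<in> {..<n} then a else undefined)"
  have "\<exists>p\<in>{p. finite_entropy p}. ennreal r < \<integral>\<^sup>+ xs. ennreal ((Hhat xs - entropy p)\<^sup>2)
          \<partial>measure_pmf (Pi_pmf {..<n} undefined (\<lambda>_. p))"
    if "r \<ge> 0" for r and Hhat :: "(nat \<Rightarrow> 'a) \<Rightarrow> real"
  proof -
    obtain p where p: "finite_entropy p" "pmf p a = 1/2"
      "2 ^ n * (r + 1) \<le> (Hhat xs\<^sub>0 - entropy p)\<^sup>2"
      using exists_pmf_half_point_far_entropy[OF assms(1)] by blast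
    have "r < (1/2) ^ n * (2 ^ n * (r + 1))"
      by (simp add: power_one_over)
    also have "\<dots> \<le> (1/2) ^ n * (Hhat xs\<^sub>0 - entropy p)\<^sup>2"
      using p(3) by (intro mult_left_mono) auto
    finally have "ennreal r < ennreal ((1/2) ^ n * (Hhat xs\<^sub>0 - entropy p)\<^sup>2)"
      using that by (intro ennreal_lessI) auto
    also have "\<dots> \<le> \<integral>\<^sup>+ xs. ennreal ((Hhat xs - entropy p)\<^sup>2)
          \<partial>measure_pmf (Pi_pmf {..<n} undefined (\<lambda>_. p))"
      using nn_integral_Pi_pmf_ge_const_sample[of "{..<n}" p a
          "\<lambda>xs. ennreal ((Hhat xs - entropy p)\<^sup>2)"]
      by (simp add: xs\<^sub>0_def p(2) ennreal_mult)
    finally show ?thesis using p(1) by blast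
  qed
  then show ?thesis by (simp add: less_top_ennreal) blast
qed

end
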